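(* Let $G$ be the final graph of the uncoordinated construction (described in the context) on a finite point set $P\subset\mathbb{R}^d$ with parameter $s>1$. Let $\mathcal{W}$ be the collection consisting of, for each edge $pq$ of $G$, the pair $(B_r(p),B_r(q))$ with $r=|pq|/(2s+2)$. Then $\mathcal{W}$ is an $s$-well-separated pair decomposition of $P$, and its size equals the number of edges of $G$.
   Context: Fix $d\ge 1$. Let $P\subset\mathbb{R}^d$ be a finite set of $n\ge 2$ points, $|xy|$ the Euclidean distance, $s>1$. For $p\in P$ and $r\ge0$, $B_r(p)=\{x\in P: |px|\le r\}$. Uncoordinated construction: start with the graph $G$ on vertex set $P$ with no edges. Every ordered pair $(p,q)$ of distinct points of $P$ is processed exactly once, in an arbitrary order, one at a time. When $(p,q)$ is processed, the edge $pq$ is added to $G$ unless $G$ currently contains an edge whose endpoints can be labeled $p',q'$ with $|pp'|\le |p'q'|/(2s+2)$ and $|qq'|\le |p'q'|/(2s+2)$. $G$ is the graph after all pairs are processed. For $A,B\subseteq P$: $\mathrm{diam}(A)=\max_{x,y\in A}|xy|$, $d(A,B)=\min_{x\in A,y\in B}|xy|$; $(A,B)$ is $s$-separated if $d(A,B)\ge s\cdot\max(\mathrm{diam}(A),\mathrm{diam}(B))$. An $s$-well-separated pair decomposition ($s$-WSPD) of $P$ is a collection of pairs $\{(A_i,B_i)\}_{i=1}^m$ with $A_i,B_i\subseteq P$, each pair $s$-separated, such that for any two points $p,q\in P$ there is some $i$ with $p\in A_i$ and $q\in B_i$; $m$ is its size. *)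

theory Defs
  imports "HOL-Analysis.Analysis"
begin

definition ballP :: "'a::metric_space set \<Rightarrow> 'a \<Rightarrow> real \<Rightarrow> 'a set" where
  "ballP P p r = {x \<in> P. dist p x \<le> r}"

definition blocked :: "real \<Rightarrow> 'a::metric_space set set \<Rightarrow> 'a \<Rightarrow> 'a \<Rightarrow> bool" where
  "blocked s E p q \<longleftrightarrow> (\<exists>p' q'. {p', q'} \<in> E \<and>
      dist p p' \<le> dist p' q' / (2 * s + 2) \<and> dist q q' \<le> dist p' q' / (2 * s + 2))"

definition step :: "real \<Rightarrow> 'a::metric_space set set \<Rightarrow> 'a \<times> 'a \<Rightarrow> 'a set set" where
  "step s E pq = (if blocked s E (fst pq) (snd pq) then E else insert {fst pq, snd pq} E)"

definition uncoord_graph :: "real \<Rightarrow> ('a::metric_space \<times> 'a) list \<Rightarrow> 'a set set" where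
  "uncoord_graph s L = fold (\<lambda>pq E. step s E pq) L {}"

text \<open>s-separated pair, using library diameter and setdist (for finite nonempty sets these
  are max and min of distances).\<close>
definition s_separated :: "real \<Rightarrow> 'a::metric_space set \<Rightarrow> 'a set \<Rightarrow> bool" where
  "s_separated s A B \<longleftrightarrow> setdist A B \<ge> s * max (diameter A) (diameter B)"

definition is_wspd :: "real \<Rightarrow> 'a::metric_space set \<Rightarrow> 'a set set set \<Rightarrow> bool" where
  "is_wspd s P W \<longleftrightarrow> finite W \<and>
     (\<forall>w\<in>W. \<exists>A B. w = {A, B} \<and> A \<subseteq> P \<and> B \<subseteq> P \<and> s_separated s A B) \<and>
     (\<forall>p\<in>P. \<forall>q\<in>P. p \<noteq> q \<longrightarrow> (\<exists>w\<in>W. \<exists>A B. w = {A, B} \<and> p \<in> A \<and> q \<in> B))"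

end

theory Submission
  imports Defs
begin

text \<open>
  Two balls of radius r = |pq|/(2s+2) around p and q have diameter at most 2r and are at
  distance at least |pq| - 2r = 2sr, so they are s-separated. Every ordered pair (p,q) is blocked
  once it has been processed, either by an earlier edge or by its own new edge pq, and a blocking
  edge p'q' puts p and q into the two balls it contributes; hence the pairs cover P. Finally, if a
  newly added edge pq produced the same pair of balls as an earlier edge, then p and q would lie in
  the balls of that earlier edge, which therefore blocks pq; so distinct edges give distinct pairs.
\<close>

lemma diameter_doubleton: "diameter {a, b :: 'a::metric_space} = dist a b"
proof (rule antisym)
  show "diameter {a, b} \<le> dist a b"
    unfolding diameter_def by (auto simp: dist_commute intro!: cSup_least)
  show "dist a b \<le> diameter {a, b}"
    by (rule diameter_bounded_bound) auto
qed

lemma diameter_ballP_le: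
  fixes x :: "'a::metric_space"
  assumes "0 \<le> r"
  shows "diameter (ballP P x r) \<le> 2 * r"
proof (cases "ballP P x r = {}")
  case False
  have "dist y z \<le> 2 * r" if "y \<in> ballP P x r" "z \<in> ballP P x r" for y z
    using that dist_triangle[of y z x] by (auto simp: ballP_def dist_commute)
  then show ?thesis
    using False unfolding diameter_def by (auto intro!: cSUP_least)
qed (use assms in simp)

lemma s_separated_ballP:
  fixes p q :: "'a::metric_space"
  assumes "p \<in> P" "q \<in> P" "0 \<le> s"
  shows "s_separated s (ballP P p (dist p q / (2 * s + 2))) (ballP P q (dist p q / (2 * s + 2)))"
proof -
  define r where "r = dist p q / (2 * s + 2)"
  have "0 \<le> r" and pq: "dist p q = (2 * s + 2) * r"
    using assms(3) by (simp_all add: r_def)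
  have "2 * s * r \<le> setdist (ballP P p r) (ballP P q r)"
    unfolding le_setdist_iff
  proof (intro conjI ballI impI)
    fix x y assume "x \<in> ballP P p r" "y \<in> ballP P q r"
    then have "dist p x \<le> r" "dist q y \<le> r" by (auto simp: ballP_def)
    moreover have "dist p q \<le> dist p x + dist x y + dist y q"
      using dist_triangle[of p q x] dist_triangle[of x q y] by simp
    ultimately show "2 * s * r \<le> dist x y"
      using pq by (simp add: dist_commute algebra_simps)
  next
    assume "ballP P p r = {} \<or> ballP P q r = {}"
    then show "2 * s * r \<le> 0" using assms \<open>0 \<le> r\<close> by (auto simp: ballP_def)
  qed
  moreover have "s * max (diameter (ballP P p r)) (diameter (ballP P q r)) \<le> s * (2 * r)"
    using diameter_ballP_le[OF \<open>0 \<le> r\<close>] assms(3) by (intro mult_left_mono) auto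
  ultimately show ?thesis
    unfolding s_separated_def r_def[symmetric] by simp
qed

text \<open>Since diameter {p, q} = |pq|, this is the pair (B_r(p), B_r(q)) that the edge pq contributes.\<close>
definition edge_balls :: "'a::metric_space set \<Rightarrow> real \<Rightarrow> 'a set \<Rightarrow> 'a set set" where
  "edge_balls P s e = (\<lambda>x. ballP P x (diameter e / (2 * s + 2))) ` e"

lemma edge_balls_doubleton:
  "edge_balls P s {p, q} = {ballP P p (dist p q / (2 * s + 2)), ballP P q (dist p q / (2 * s + 2))}"
  by (simp add: edge_balls_def diameter_doubleton)

abbreviation process_pairs :: "real \<Rightarrow> ('a::metric_space \<times> 'a) list \<Rightarrow> 'a set set \<Rightarrow> 'a set set"
  where "process_pairs s L E \<equiv> fold (\<lambda>pq E. step s E pq) L E"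

lemma subset_process_pairs: "E \<subseteq> process_pairs s L E"
proof (induction L arbitrary: E)
  case (Cons x L)
  have "E \<subseteq> step s E x" by (simp add: step_def subset_insertI)
  with Cons.IH[of "step s E x"] show ?case by simp
qed simp

lemma edge_process_pairs:
  "e \<in> process_pairs s L E \<Longrightarrow> e \<in> E \<or> (\<exists>(a, b) \<in> set L. e = {a, b})"
proof (induction L arbitrary: E)
  case (Cons x L)
  from Cons.IH[OF Cons.prems[simplified]] show ?case
    by (cases x) (auto simp: step_def split: if_splits)
qed simp

lemma blocked_mono: "blocked s E p q \<Longrightarrow> E \<subseteq> E' \<Longrightarrow> blocked s E' p q"
  unfolding blocked_def by blast

lemma blocked_step_self:
  assumes "-1 < s"
  shows "blocked s (step s E (p, q)) p q"
proof (cases "blocked s E p q")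
  case False
  have "0 \<le> dist p q / (2 * s + 2)" using assms by simp
  with False show ?thesis
    unfolding step_def blocked_def by (intro exI[of _ p] exI[of _ q]) auto
qed (simp add: step_def)

lemma blocked_process_pairs:
  assumes "-1 < s" "(p, q) \<in> set L"
  shows "blocked s (process_pairs s L E) p q"
  using assms(2)
proof (induction L arbitrary: E)
  case (Cons x L)
  show ?case
  proof (cases "(p, q) \<in> set L")
    case False
    with Cons.prems have "x = (p, q)" by simp
    with blocked_step_self[OF assms(1)] show ?thesis
      using blocked_mono subset_process_pairs by (simp, blast)
  qed (use Cons.IH in simp)
qed simp

lemma blocked_if_edge_balls_eq:
  assumes "-1 < s" "p \<in> P" "q \<in> P" "{c, d} \<in> E"
    and eq: "edge_balls P s {p, q} = edge_balls P s {c, d}"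
  shows "blocked s E p q"
proof -
  define r r' where "r = dist p q / (2 * s + 2)" and "r' = dist c d / (2 * s + 2)"
  have p: "p \<in> ballP P p r" and q: "q \<in> ballP P q r"
    using assms(1-3) by (simp_all add: ballP_def r_def)
  from eq have "{ballP P p r, ballP P q r} = {ballP P c r', ballP P d r'}"
    by (simp only: edge_balls_doubleton r_def r'_def)
  then consider "ballP P p r = ballP P c r'" "ballP P q r = ballP P d r'"
    | "ballP P p r = ballP P d r'" "ballP P q r = ballP P c r'"
    by (auto simp: doubleton_eq_iff)
  then show ?thesis
  proof cases
    case 1
    with p q assms(4) show ?thesis
      unfolding blocked_def r'_def by (intro exI[of _ c] exI[of _ d]) (auto simp: ballP_def dist_commute)
  next
    case 2
    moreover have "{d, c} \<in> E" using assms(4) by (simp add: insert_commute)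
    ultimately show ?thesis using p q
      unfolding blocked_def r'_def by (intro exI[of _ d] exI[of _ c]) (auto simp: ballP_def dist_commute)
  qed
qed

lemma inj_on_edge_balls_step:
  assumes "-1 < s" "p \<in> P" "q \<in> P"
    and doubletons: "\<forall>e \<in> E. \<exists>c d. e = {c, d}"
    and inj: "inj_on (edge_balls P s) E"
  shows "inj_on (edge_balls P s) (step s E (p, q))"
proof (cases "blocked s E p q")
  case False
  have "edge_balls P s {p, q} \<notin> edge_balls P s ` (E - {{p, q}})"
  proof
    assume "edge_balls P s {p, q} \<in> edge_balls P s ` (E - {{p, q}})"
    then obtain e where e: "e \<in> E" "edge_balls P s {p, q} = edge_balls P s e" by blast
    moreover obtain c d where "e = {c, d}" using doubletons e(1) by blast
    ultimately show False
      using blocked_if_edge_balls_eq[OF assms(1-3), of c d E] False by simp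
  qed
  with inj False show ?thesis by (simp add: step_def)
qed (use inj in \<open>simp add: step_def\<close>)

lemma inj_on_edge_balls_process_pairs:
  assumes "-1 < s" "set L \<subseteq> P \<times> P"
    and "\<forall>e \<in> E. \<exists>c d. e = {c, d}" "inj_on (edge_balls P s) E"
  shows "inj_on (edge_balls P s) (process_pairs s L E)"
  using assms(2-)
proof (induction L arbitrary: E)
  case (Cons x L)
  obtain p q where x: "x = (p, q)" by fastforce
  have "p \<in> P" "q \<in> P" using Cons.prems(1) x by auto
  with Cons.prems(2,3) have "inj_on (edge_balls P s) (step s E x)"
    using inj_on_edge_balls_step[OF assms(1)] x by simp
  moreover have "\<forall>e \<in> step s E x. \<exists>c d. e = {c, d}"
    using Cons.prems(2) by (auto simp: step_def)
  ultimately show ?case using Cons.IH Cons.prems(1) by simp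
qed simp

lemma edge_uncoord_graph:
  assumes "set L \<subseteq> P \<times> P" "e \<in> uncoord_graph s L"
  shows "\<exists>a \<in> P. \<exists>b \<in> P. e = {a, b}"
  using edge_process_pairs[of e s L "{}"] assms by (auto simp: uncoord_graph_def)

lemma finite_uncoord_graph:
  assumes "finite P" "set L \<subseteq> P \<times> P"
  shows "finite (uncoord_graph s L)"
proof (rule finite_subset)
  show "uncoord_graph s L \<subseteq> Pow P" using edge_uncoord_graph[OF assms(2)] by blast
qed (use assms(1) in simp)

lemma inj_on_edge_balls_uncoord_graph:
  assumes "-1 < s" "set L \<subseteq> P \<times> P"
  shows "inj_on (edge_balls P s) (uncoord_graph s L)"
  unfolding uncoord_graph_def using inj_on_edge_balls_process_pairs[OF assms] by simp

lemma image_edge_balls_uncoord_graph: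
  assumes "set L \<subseteq> P \<times> P"
  shows "{{ballP P p (dist p q / (2 * s + 2)), ballP P q (dist p q / (2 * s + 2))} | p q.
            {p, q} \<in> uncoord_graph s L} = edge_balls P s ` uncoord_graph s L"
proof (intro equalityI subsetI)
  fix w assume "w \<in> edge_balls P s ` uncoord_graph s L"
  then obtain p q where "{p, q} \<in> uncoord_graph s L" "w = edge_balls P s {p, q}"
    using edge_uncoord_graph[OF assms] by blast
  then show "w \<in> {{ballP P p (dist p q / (2 * s + 2)), ballP P q (dist p q / (2 * s + 2))} | p q.
            {p, q} \<in> uncoord_graph s L}" by (auto simp: edge_balls_doubleton)
qed (auto simp: edge_balls_doubleton[symmetric])

lemma is_wspd_edge_balls_uncoord_graph:
  assumes "finite P" "0 \<le> s" and L: "set L = {(p, q). p \<in> P \<and> q \<in> P \<and> p \<noteq> q}"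
  shows "is_wspd s P (edge_balls P s ` uncoord_graph s L)"
proof -
  let ?G = "uncoord_graph s L"
  have LP: "set L \<subseteq> P \<times> P" using L by auto
  have separated: "\<exists>A B. w = {A, B} \<and> A \<subseteq> P \<and> B \<subseteq> P \<and> s_separated s A B"
    if "w \<in> edge_balls P s ` ?G" for w
  proof -
    from that edge_uncoord_graph[OF LP] obtain p q
      where pq: "p \<in> P" "q \<in> P" "w = edge_balls P s {p, q}" by blast
    let ?r = "dist p q / (2 * s + 2)"
    have "w = {ballP P p ?r, ballP P q ?r}" using pq(3) by (simp only: edge_balls_doubleton)
    moreover have "ballP P p ?r \<subseteq> P" "ballP P q ?r \<subseteq> P" by (auto simp: ballP_def)
    moreover have "s_separated s (ballP P p ?r) (ballP P q ?r)"
      using s_separated_ballP[OF pq(1,2) assms(2)] .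
    ultimately show ?thesis by blast
  qed
  have cover: "\<exists>w \<in> edge_balls P s ` ?G. \<exists>A B. w = {A, B} \<and> p \<in> A \<and> q \<in> B"
    if "p \<in> P" "q \<in> P" "p \<noteq> q" for p q
  proof -
    have "blocked s ?G p q"
      using blocked_process_pairs[of s p q L "{}"] that assms(2) L by (simp add: uncoord_graph_def)
    then obtain a b where "{a, b} \<in> ?G" "dist p a \<le> dist a b / (2 * s + 2)"
      "dist q b \<le> dist a b / (2 * s + 2)" unfolding blocked_def by blast
    moreover have "p \<in> ballP P a (dist a b / (2 * s + 2))" "q \<in> ballP P b (dist a b / (2 * s + 2))"
      using calculation that by (auto simp: ballP_def dist_commute)
    moreover have "edge_balls P s {a, b} \<in> edge_balls P s ` ?G" using \<open>{a, b} \<in> ?G\<close> by blast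
    moreover note edge_balls_doubleton[of P s a b]
    ultimately show ?thesis by blast
  qed
  show ?thesis
    using finite_uncoord_graph[OF assms(1) LP] separated cover by (simp add: is_wspd_def)
qed

theorem theorem4:
  fixes P :: "'a::euclidean_space set" and s :: real and L :: "('a \<times> 'a) list"
  assumes "finite P" and "card P \<ge> 2" and "s > 1"
    and "distinct L" and "set L = {(p, q). p \<in> P \<and> q \<in> P \<and> p \<noteq> q}"
  shows "is_wspd s P {{ballP P p (dist p q / (2 * s + 2)), ballP P q (dist p q / (2 * s + 2))} | p q.
                       {p, q} \<in> uncoord_graph s L}
       \<and> card {{ballP P p (dist p q / (2 * s + 2)), ballP P q (dist p q / (2 * s + 2))} | p q.
                       {p, q} \<in> uncoord_graph s L} = card (uncoord_graph s L)"
proof -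
  have LP: "set L \<subseteq> P \<times> P" using assms(5) by auto
  have "is_wspd s P (edge_balls P s ` uncoord_graph s L)"
    using is_wspd_edge_balls_uncoord_graph[OF assms(1) _ assms(5)] assms(3) by simp
  moreover have "card (edge_balls P s ` uncoord_graph s L) = card (uncoord_graph s L)"
    using inj_on_edge_balls_uncoord_graph[OF _ LP] assms(3) by (simp add: card_image)
  ultimately show ?thesis
    unfolding image_edge_balls_uncoord_graph[OF LP] by simp
qed

end
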